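(* Let $(S,* )$ be a finite cycle set of class $d$ and let $k$ be a positive integer with $k<d$. Then the cycle set $(S^{[k]},\star)$ has class $d/\gcd(d,k)$. Moreover, $(S^{[d+1]},\star)$ coincides with $(S,* )$ as a cycle set, i.e. $\psi_{d+1}(s)(t)=s*t$ for all $s,t\in S$.
   Context: A cycle set is a set $S$ with a binary operation $*$ such that each $t\mapsto s*t$ is bijective and $(s*t)*(s*u)=(t*s)*(t*u)$ for all $s,t,u$. Write $S=\{s_1,\dots,s_n\}$, let $\psi(s)\in\mathfrak S_n$ satisfy $s_i*s_j=s_{\psi(s_i)(j)}$, $T(s)=s*s$, and $\psi_k(s)=\psi(T^{k-1}(s))\circ\cdots\circ\psi(T(s))\circ\psi(s)$. The class of a finite cycle set is the least integer $d\ge1$ with $\psi_d(s)=\mathrm{id}$ for all $s$. Let $M=\langle S\mid s(s*t)=t(t*s)\rangle^+$ be the structure monoid and $s^{[k]}=s\,T(s)\cdots T^{k-1}(s)\in M$. For $k\ge1$, $S^{[k]}=\{s^{[k]}:s\in S\}$ with $s^{[k]}\star t^{[k]}=(\psi_k(s)(t))^{[k]}$ is a cycle set (identified with $S$ via $s\mapsto s^{[k]}$). *)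

theory Defs
  imports Main
begin

definition cycle_set :: "'a set \<Rightarrow> ('a \<Rightarrow> 'a \<Rightarrow> 'a) \<Rightarrow> bool" where
  "cycle_set S op \<longleftrightarrow>
     (\<forall>s\<in>S. bij_betw (op s) S S) \<and>
     (\<forall>s\<in>S. \<forall>t\<in>S. \<forall>u\<in>S. op (op s t) (op s u) = op (op t s) (op t u))"

text \<open>psi(s) is the map t |-> s*t; T(s) = s*s.\<close>
definition cs_T :: "('a \<Rightarrow> 'a \<Rightarrow> 'a) \<Rightarrow> 'a \<Rightarrow> 'a" where
  "cs_T op s = op s s"

text \<open>psi_k(s) = psi(T^(k-1) s) o ... o psi(T s) o psi(s), so psi_0 = id and
  psi_(k+1)(s) = psi_k(T s) o psi(s).\<close>
fun psik :: "('a \<Rightarrow> 'a \<Rightarrow> 'a) \<Rightarrow> nat \<Rightarrow> 'a \<Rightarrow> 'a \<Rightarrow> 'a" where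
  "psik op 0 s = id"
| "psik op (Suc k) s = psik op k (cs_T op s) \<circ> op s"

definition has_class :: "'a set \<Rightarrow> ('a \<Rightarrow> 'a \<Rightarrow> 'a) \<Rightarrow> nat \<Rightarrow> bool" where
  "has_class S op d \<longleftrightarrow>
     1 \<le> d \<and> (\<forall>s\<in>S. \<forall>t\<in>S. psik op d s t = t) \<and>
     (\<forall>d'. 1 \<le> d' \<and> d' < d \<longrightarrow> \<not> (\<forall>s\<in>S. \<forall>t\<in>S. psik op d' s t = t))"

text \<open>The cycle set S^[k], identified with S via s |-> s^[k]: s \<star> t = psi_k(s)(t).\<close>
definition power_cs :: "('a \<Rightarrow> 'a \<Rightarrow> 'a) \<Rightarrow> nat \<Rightarrow> 'a \<Rightarrow> 'a \<Rightarrow> 'a" where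
  "power_cs op k s t = psik op k s t"

end

theory Submission
  imports Defs
begin

text \<open>Since \<open>\<psi>\<^sub>a\<^sub>+\<^sub>b(s) = \<psi>\<^sub>b(T\<^sup>a s) \<circ> \<psi>\<^sub>a(s)\<close>, any \<open>a\<close> with \<open>\<psi>\<^sub>a = id\<close> on \<open>S\<close> is a period
  of \<open>n \<mapsto> \<psi>\<^sub>n\<close>, so the exponents \<open>n\<close> with \<open>\<psi>\<^sub>n = id\<close> are exactly the multiples of the
  class \<open>d\<close>. As \<open>T\<close> in \<open>S\<^bsup>[k]\<^esup>\<close> is \<open>T\<^sup>k\<close>, the map \<open>\<psi>\<^sub>m\<close> of \<open>S\<^bsup>[k]\<^esup>\<close> is \<open>\<psi>\<^sub>k\<^sub>m\<close> of \<open>S\<close>; hence it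
  is the identity iff \<open>d\<close> divides \<open>km\<close>, i.e. iff \<open>d / gcd(d,k)\<close> divides \<open>m\<close>. Finally
  \<open>\<psi>\<^sub>d\<^sub>+\<^sub>1(s) = \<psi>\<^sub>d(T s) \<circ> \<psi>(s) = \<psi>(s)\<close>.\<close>

definition psik_trivial :: "'a set \<Rightarrow> ('a \<Rightarrow> 'a \<Rightarrow> 'a) \<Rightarrow> nat \<Rightarrow> bool" where
  "psik_trivial S op n \<longleftrightarrow> (\<forall>s\<in>S. \<forall>t\<in>S. psik op n s t = t)"

lemma has_class_iff_least_psik_trivial:
  "has_class S op d \<longleftrightarrow>
     1 \<le> d \<and> psik_trivial S op d \<and> (\<forall>d'. 1 \<le> d' \<and> d' < d \<longrightarrow> \<not> psik_trivial S op d')"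
  by (simp add: has_class_def psik_trivial_def)

lemma psik_add: "psik op (a + b) s = psik op b ((cs_T op ^^ a) s) \<circ> psik op a s"
  by (induction a arbitrary: s) (auto simp: funpow_swap1)

lemma psik_self: "psik op k s s = (cs_T op ^^ k) s"
proof (induction k arbitrary: s)
  case (Suc k)
  have "psik op (Suc k) s s = psik op k (cs_T op s) (cs_T op s)"
    by (simp add: cs_T_def)
  then show ?case
    using Suc by (simp add: funpow_swap1)
qed simp

lemma cs_T_power_cs: "cs_T (power_cs op k) s = (cs_T op ^^ k) s"
  by (simp add: cs_T_def power_cs_def psik_self)

lemma psik_power_cs: "psik (power_cs op k) m s = psik op (k * m) s"
proof (induction m arbitrary: s)
  case (Suc m)
  have "psik (power_cs op k) (Suc m) s = psik op (k * m) ((cs_T op ^^ k) s) \<circ> psik op k s"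
    using Suc cs_T_power_cs[of op k s] by (simp add: power_cs_def[abs_def])
  also have "\<dots> = psik op (k + k * m) s"
    by (simp add: psik_add)
  finally show ?case
    by simp
qed simp

lemma psik_trivial_power_cs: "psik_trivial S (power_cs op k) m \<longleftrightarrow> psik_trivial S op (k * m)"
  by (simp add: psik_trivial_def psik_power_cs)

lemma dvd_mult_iff_div_gcd_dvd:
  fixes d k m :: nat
  assumes "0 < d"
  shows "d dvd k * m \<longleftrightarrow> d div gcd d k dvd m"
proof -
  define g where "g = gcd d k"
  obtain d' k' where d: "d = d' * g" and k: "k = k' * g" and "coprime d' k'"
    using gcd_coprime_exists[of d k] assms unfolding g_def by auto
  have "g \<noteq> 0"
    using assms by (simp add: g_def)
  have "d dvd k * m \<longleftrightarrow> d' * g dvd (k' * m) * g"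
    using d k by (simp add: ac_simps)
  also have "\<dots> \<longleftrightarrow> d' dvd m"
    using \<open>g \<noteq> 0\<close> \<open>coprime d' k'\<close> by (simp add: coprime_dvd_mult_right_iff)
  also have "d' = d div gcd d k"
    using \<open>g \<noteq> 0\<close> d unfolding g_def[symmetric] by simp
  finally show ?thesis .
qed

locale closed_operation =
  fixes S :: "'a set" and op :: "'a \<Rightarrow> 'a \<Rightarrow> 'a"
  assumes op_closed: "s \<in> S \<Longrightarrow> t \<in> S \<Longrightarrow> op s t \<in> S"
begin

lemma funpow_cs_T_closed: "s \<in> S \<Longrightarrow> (cs_T op ^^ n) s \<in> S"
  by (induction n) (auto simp: cs_T_def op_closed)

lemma psik_closed: "s \<in> S \<Longrightarrow> t \<in> S \<Longrightarrow> psik op n s t \<in> S"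
  by (induction n arbitrary: s t) (auto simp: cs_T_def op_closed)

lemma closed_operation_power_cs: "closed_operation S (power_cs op k)"
  by unfold_locales (simp add: power_cs_def psik_closed)

text \<open>Compare the two factorisations of \<open>\<psi>\<^sub>a\<^sub>+\<^sub>b(s)\<close>, first through \<open>\<psi>\<^sub>a\<close>, then through \<open>\<psi>\<^sub>b\<close>.\<close>
lemma psik_funpow_cs_T_period:
  assumes "psik_trivial S op a" "s \<in> S" "t \<in> S"
  shows "psik op b ((cs_T op ^^ a) s) t = psik op b s t"
proof -
  have "psik op b ((cs_T op ^^ a) s) t = psik op (a + b) s t"
    using assms by (simp add: psik_add psik_trivial_def)
  also have "\<dots> = psik op (b + a) s t"
    by (simp add: add.commute)
  also have "\<dots> = psik op b s t"
    using assms by (simp add: psik_add psik_trivial_def funpow_cs_T_closed psik_closed)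
  finally show ?thesis .
qed

lemma psik_add_period:
  assumes "psik_trivial S op a" "s \<in> S" "t \<in> S"
  shows "psik op (a + b) s t = psik op b s t"
  using psik_funpow_cs_T_period[OF assms] assms by (simp add: psik_add psik_trivial_def)

lemma psik_mod_period:
  assumes "psik_trivial S op a" "s \<in> S" "t \<in> S"
  shows "psik op n s t = psik op (n mod a) s t"
proof (induction n rule: less_induct)
  case (less n)
  show ?case
  proof (cases "0 < a \<and> a \<le> n")
    case True
    then have "psik op n s t = psik op (n - a) s t"
      using psik_add_period[OF assms, of "n - a"] by simp
    also have "\<dots> = psik op ((n - a) mod a) s t"
      using True by (intro less.IH) simp
    also have "(n - a) mod a = n mod a"
      using True by (simp add: le_mod_geq)
    finally show ?thesis .
  qed auto
qed

lemma has_class_iff_dvd: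
  "has_class S op d \<longleftrightarrow> 1 \<le> d \<and> (\<forall>n. psik_trivial S op n \<longleftrightarrow> d dvd n)"
proof
  assume d_class: "has_class S op d"
  then have "1 \<le> d" and trivial_d: "psik_trivial S op d"
    by (simp_all add: has_class_iff_least_psik_trivial)
  have "psik_trivial S op n \<longleftrightarrow> psik_trivial S op (n mod d)" for n
    using psik_mod_period[OF trivial_d, of _ _ n] by (simp add: psik_trivial_def)
  moreover have "psik_trivial S op (n mod d) \<longleftrightarrow> n mod d = 0" for n
  proof
    assume "psik_trivial S op (n mod d)"
    moreover have "n mod d < d"
      using \<open>1 \<le> d\<close> by simp
    ultimately show "n mod d = 0"
      using d_class unfolding has_class_iff_least_psik_trivial by (metis less_one not_le)
  qed (simp add: psik_trivial_def)
  ultimately show "1 \<le> d \<and> (\<forall>n. psik_trivial S op n \<longleftrightarrow> d dvd n)"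
    using \<open>1 \<le> d\<close> by (simp add: mod_eq_0_iff_dvd)
next
  assume "1 \<le> d \<and> (\<forall>n. psik_trivial S op n \<longleftrightarrow> d dvd n)"
  then show "has_class S op d"
    by (auto simp: has_class_iff_least_psik_trivial dest: dvd_imp_le)
qed

theorem has_class_power_cs:
  assumes "has_class S op d"
  shows "has_class S (power_cs op k) (d div gcd d k)"
proof -
  interpret power: closed_operation S "power_cs op k"
    by (rule closed_operation_power_cs)
  have "0 < d" and trivial_iff: "\<And>n. psik_trivial S op n \<longleftrightarrow> d dvd n"
    using assms by (auto simp: has_class_iff_dvd)
  have "gcd d k \<le> d"
    using \<open>0 < d\<close> by (simp add: dvd_imp_le)
  then have "1 \<le> d div gcd d k"
    using \<open>0 < d\<close> by (simp add: Suc_le_eq div_greater_zero_iff)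
  moreover have "psik_trivial S (power_cs op k) m \<longleftrightarrow> d div gcd d k dvd m" for m
    using \<open>0 < d\<close> by (simp add: psik_trivial_power_cs trivial_iff dvd_mult_iff_div_gcd_dvd)
  ultimately show ?thesis
    by (simp add: power.has_class_iff_dvd)
qed

theorem power_cs_Suc_class:
  assumes "has_class S op d" "s \<in> S" "t \<in> S"
  shows "power_cs op (d + 1) s t = op s t"
  using psik_add_period[of d s t 1] assms
  by (simp add: power_cs_def has_class_iff_least_psik_trivial)

end

lemma cycle_set_closed_operation: "cycle_set S op \<Longrightarrow> closed_operation S op"
  unfolding cycle_set_def by unfold_locales (auto dest: bij_betwE)

theorem mainTheorem10:
  fixes S :: "'a set" and op :: "'a \<Rightarrow> 'a \<Rightarrow> 'a" and d k :: nat
  assumes "finite S" and "cycle_set S op" and "has_class S op d"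
    and "1 \<le> k" and "k < d"
  shows "has_class S (power_cs op k) (d div gcd d k) \<and>
         (\<forall>s\<in>S. \<forall>t\<in>S. power_cs op (d + 1) s t = op s t)"
proof -
  interpret closed_operation S op
    using assms(2) by (rule cycle_set_closed_operation)
  show ?thesis
    using assms(3) has_class_power_cs power_cs_Suc_class by blast
qed

end
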